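(* Let $k$ be a positive integer and $y>1$ a real number. If $n$ is a $y$-friable positive integer with $n\le y^{(k+1)/2}$, then $n$ can be factored as $n=b_1b_2\cdots b_k$ with positive integers $b_j$ satisfying $b_j\le y$ for each $1\le j\le k$.
   Context: A positive integer $n$ is $y$-friable if every prime factor of $n$ is at most $y$. *)

theory Defs
  imports Complex_Main "HOL-Computational_Algebra.Primes"
begin

definition friable :: "real \<Rightarrow> nat \<Rightarrow> bool" where
  "friable y n \<longleftrightarrow> n > 0 \<and> (\<forall>p \<in> prime_factors n. real p \<le> y)"

end

theory Submission
  imports Defs
begin

text \<open>
  A y-friable n > y has a divisor d in [sqrt y, y]: either some prime
  factor of n lies there, or all prime factors are at most sqrt y, and then the partial
  products of the prime factorisation climb to n in steps of ratio at most sqrt y, so one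
  of them lands in [sqrt y, y]. Splitting off d lowers the bound by the factor sqrt y,
  i.e. from y^((k+2)/2) to y^((k+1)/2).
\<close>

lemma friable_dvd:
  assumes "friable y n" "m dvd n"
  shows "friable y m"
  using assms unfolding friable_def
  by (auto simp: in_prime_factors_iff intro: dvd_trans dvd_pos_nat)

lemma friable_divisor_between:
  fixes x z :: real
  assumes "friable z n" "1 \<le> z" "1 \<le> x" "x \<le> real n"
  shows "\<exists>d. d dvd n \<and> x \<le> real d \<and> real d \<le> x * z"
  using assms(1,4)
proof (induction n rule: less_induct)
  case (less n)
  show ?case
  proof (cases "n = 1")
    case True
    then have "x = 1" using less.prems(2) assms(3) by simp
    then show ?thesis using assms(2) by (intro exI[of _ 1]) simp
  next
    case False
    then obtain p where p: "prime p" "p dvd n" using prime_factor_nat by blast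
    have "n > 0" using less.prems(1) by (simp add: friable_def)
    then have p_le: "real p \<le> z"
      using less.prems(1) p by (auto simp: friable_def in_prime_factors_iff)
    define m where "m = n div p"
    have n_eq: "n = m * p" using p(2) by (simp add: m_def)
    have "m < n" using \<open>n > 0\<close> prime_gt_1_nat[OF p(1)] by (simp add: m_def)
    have "friable z m" using friable_dvd[OF less.prems(1)] n_eq by simp
    show ?thesis
    proof (cases "x \<le> real m")
      case True
      then obtain d where "d dvd m" "x \<le> real d" "real d \<le> x * z"
        using less.IH[OF \<open>m < n\<close> \<open>friable z m\<close>] by blast
      moreover have "d dvd n" using \<open>d dvd m\<close> n_eq by simp
      ultimately show ?thesis by blast
    next
      case False
      have "real n = real m * real p" using n_eq by simp
      also have "\<dots> \<le> real m * z" using p_le by (intro mult_left_mono) simp_all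
      also have "\<dots> \<le> x * z" using False assms(2) by (intro mult_right_mono) simp_all
      finally show ?thesis using less.prems(2) by (intro exI[of _ n]) simp
    qed
  qed
qed

lemma friable_divisor_sqrt:
  assumes "friable y n" "1 \<le> y" "y \<le> real n"
  shows "\<exists>d. d dvd n \<and> sqrt y \<le> real d \<and> real d \<le> y"
proof (cases "\<exists>p\<in>prime_factors n. sqrt y < real p")
  case True
  then obtain p where p: "p \<in> prime_factors n" "sqrt y < real p" by blast
  then have "p dvd n" "real p \<le> y" using assms(1) by (auto simp: friable_def)
  then show ?thesis using p(2) by (intro exI[of _ p]) simp
next
  case False
  then have "friable (sqrt y) n" using assms(1) by (auto simp: friable_def not_less)
  moreover have "1 \<le> sqrt y" using assms(2) by simp
  moreover have "sqrt y \<le> real n"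
    using assms(2,3) real_sqrt_le_mono[of y "y\<^sup>2"] by (simp add: power2_eq_square)
  ultimately obtain d where "d dvd n" "sqrt y \<le> real d" "real d \<le> sqrt y * sqrt y"
    using friable_divisor_between by blast
  then show ?thesis using assms(2) by auto
qed

lemma friable_split_off_divisor:
  assumes "friable y n" "1 \<le> y" "y \<le> B" "real n \<le> B * sqrt y"
  shows "\<exists>d. d dvd n \<and> 0 < d \<and> real d \<le> y \<and> real (n div d) \<le> B"
proof (cases "real n \<le> B")
  case True
  then show ?thesis using assms(2) by (intro exI[of _ 1]) auto
next
  case False
  then have "y \<le> real n" using assms(3) by linarith
  then obtain d where d: "d dvd n" "sqrt y \<le> real d" "real d \<le> y"
    using friable_divisor_sqrt[OF assms(1,2)] by blast
  have "0 < sqrt y" using assms(2) by simp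
  then have "real (n div d) = real n / real d" using d(1,2) by (simp add: real_of_nat_div)
  also have "\<dots> \<le> real n / sqrt y" using d(2) \<open>0 < sqrt y\<close> by (simp add: frac_le)
  also have "\<dots> \<le> B" using assms(4) \<open>0 < sqrt y\<close> by (simp add: divide_le_eq)
  finally have "real (n div d) \<le> B" .
  moreover have "0 < d" using d(2) assms(2) real_sqrt_ge_one[of y] by linarith
  ultimately show ?thesis using d by blast
qed

lemma prod_atLeastAtMost_Suc_fun_upd:
  "(\<Prod>j\<in>{1..Suc k}. (b(Suc k := d)) j) = (\<Prod>j\<in>{1..k}. b j) * (d :: 'a :: comm_monoid_mult)"
proof -
  have "(\<Prod>j\<in>{1..k}. (b(Suc k := d)) j) = (\<Prod>j\<in>{1..k}. b j)" by (intro prod.cong) auto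
  then show ?thesis by (simp add: prod.cl_ivl_Suc)
qed

lemma powr_Suc_half:
  fixes y :: real
  assumes "0 \<le> y"
  shows "y powr ((real (Suc k) + 1) / 2) = y powr ((real k + 1) / 2) * sqrt y"
proof -
  have "(real (Suc k) + 1) / 2 = (real k + 1) / 2 + 1 / 2" by simp
  then show ?thesis using assms by (simp only: powr_add powr_half_sqrt)
qed

theorem proposition3p1:
  fixes k n :: nat and y :: real
  assumes "k \<ge> 1" and "y > 1"
    and "friable y n"
    and "real n \<le> y powr ((real k + 1) / 2)"
  shows "\<exists>b :: nat \<Rightarrow> nat. n = (\<Prod>j\<in>{1..k}. b j) \<and>
           (\<forall>j\<in>{1..k}. b j > 0 \<and> real (b j) \<le> y)"
  using assms(1,3,4)
proof (induction k arbitrary: n rule: nat_induct_at_least)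
  case base
  then show ?case using assms(2) by (intro exI[of _ "\<lambda>_. n"]) (auto simp: friable_def)
next
  case (Suc k)
  have "1 \<le> (real k + 1) / 2" using \<open>k \<ge> 1\<close> by simp
  then have y_le: "y \<le> y powr ((real k + 1) / 2)"
    using assms(2) powr_mono[of 1 "(real k + 1) / 2" y] by simp
  have "real n \<le> y powr ((real k + 1) / 2) * sqrt y"
    using Suc.prems(2) powr_Suc_half[of y k] assms(2) by simp
  then obtain d where d: "d dvd n" "0 < d" "real d \<le> y"
      "real (n div d) \<le> y powr ((real k + 1) / 2)"
    using friable_split_off_divisor[OF Suc.prems(1) less_imp_le[OF assms(2)] y_le] by blast
  have "friable y (n div d)"
    using friable_dvd[OF Suc.prems(1)] d(1) by (metis dvd_div_mult_self dvd_triv_left)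
  then obtain b where b: "n div d = (\<Prod>j\<in>{1..k}. b j)" "\<forall>j\<in>{1..k}. 0 < b j \<and> real (b j) \<le> y"
    using Suc.IH d(4) by blast
  have "n = (\<Prod>j\<in>{1..Suc k}. (b(Suc k := d)) j)"
    using d(1) b(1) by (metis prod_atLeastAtMost_Suc_fun_upd dvd_div_mult_self)
  moreover have "\<forall>j\<in>{1..Suc k}. 0 < (b(Suc k := d)) j \<and> real ((b(Suc k := d)) j) \<le> y"
    using b(2) d(2,3) by (auto simp: le_Suc_eq)
  ultimately show ?case by (rule exI[of _ "b(Suc k := d)", OF conjI])
qed

end
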